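(* Let $c,\delta,M$ be positive constants and fix a metric on the disc $D_c=\{z\in\mathbb{C}:|z|<c\}$, with Laplacian $\triangle$. Then there is a constant $\lambda=\lambda(\delta,M,c)$ such that every smooth function $f:D_c\to\mathbb{C}$ satisfying $|f|\le\delta$ and $|d\triangle f|\le M$ on $D_c$ satisfies $|\triangle f|\le\lambda$ on $D_{c/4}=\{|z|<c/4\}$. *)

theory Defs
  imports "HOL-Analysis.Analysis"
begin

definition dx :: "(complex \<Rightarrow> 'a::real_normed_vector) \<Rightarrow> complex \<Rightarrow> 'a" where
  "dx f z = vector_derivative (\<lambda>t::real. f (z + of_real t)) (at 0)"

definition dy :: "(complex \<Rightarrow> 'a::real_normed_vector) \<Rightarrow> complex \<Rightarrow> 'a" where
  "dy f z = vector_derivative (\<lambda>t::real. f (z + \<i> * of_real t)) (at 0)"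

text \<open>Iterated partial derivatives: True = d/dx, False = d/dy (innermost last).\<close>
fun iter_partial :: "bool list \<Rightarrow> (complex \<Rightarrow> 'a::real_normed_vector) \<Rightarrow> complex \<Rightarrow> 'a" where
  "iter_partial [] f = f"
| "iter_partial (b # bs) f = (if b then dx else dy) (iter_partial bs f)"

definition smooth_on :: "complex set \<Rightarrow> (complex \<Rightarrow> 'a::real_normed_vector) \<Rightarrow> bool" where
  "smooth_on S f \<longleftrightarrow>
     (\<forall>bs. continuous_on S (iter_partial bs f) \<and>
        (\<forall>z\<in>S. ((\<lambda>t::real. iter_partial bs f (z + of_real t)) has_vector_derivative
                    dx (iter_partial bs f) z) (at 0) \<and>
                ((\<lambda>t::real. iter_partial bs f (z + \<i> * of_real t)) has_vector_derivative
                    dy (iter_partial bs f) z) (at 0)))"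

text \<open>A smooth Riemannian metric g = g11 dx^2 + 2 g12 dx dy + g22 dy^2 on S.\<close>
definition riem_metric_on :: "complex set \<Rightarrow> (complex \<Rightarrow> real) \<Rightarrow> (complex \<Rightarrow> real) \<Rightarrow> (complex \<Rightarrow> real) \<Rightarrow> bool" where
  "riem_metric_on S g11 g12 g22 \<longleftrightarrow>
     smooth_on S g11 \<and> smooth_on S g12 \<and> smooth_on S g22 \<and>
     (\<forall>z\<in>S. g11 z > 0 \<and> g11 z * g22 z - (g12 z)\<^sup>2 > 0)"

definition gdet :: "(complex \<Rightarrow> real) \<Rightarrow> (complex \<Rightarrow> real) \<Rightarrow> (complex \<Rightarrow> real) \<Rightarrow> complex \<Rightarrow> real" where
  "gdet g11 g12 g22 z = g11 z * g22 z - (g12 z)\<^sup>2"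

text \<open>Laplace--Beltrami operator of the metric:
  Lap f = (1/sqrt det g) * d_i (sqrt det g * g^{ij} d_j f), with inverse metric
  g^{11} = g22/det, g^{12} = -g12/det, g^{22} = g11/det.\<close>
definition laplacian ::
  "(complex \<Rightarrow> real) \<Rightarrow> (complex \<Rightarrow> real) \<Rightarrow> (complex \<Rightarrow> real) \<Rightarrow> (complex \<Rightarrow> complex) \<Rightarrow> complex \<Rightarrow> complex" where
  "laplacian g11 g12 g22 f z =
     (let det = gdet g11 g12 g22;
          X = (\<lambda>w. complex_of_real (sqrt (det w)) *
                  (complex_of_real (g22 w / det w) * dx f w - complex_of_real (g12 w / det w) * dy f w));
          Y = (\<lambda>w. complex_of_real (sqrt (det w)) *
                  (complex_of_real (- g12 w / det w) * dx f w + complex_of_real (g11 w / det w) * dy f w))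
      in complex_of_real (1 / sqrt (det z)) * (dx X z + dy Y z))"

text \<open>Pointwise norm of the differential du of a complex function with respect to the
  metric: |du|_g^2 = g^{ij} <d_i u, d_j u> (real inner product on C = R^2).\<close>
definition dnorm ::
  "(complex \<Rightarrow> real) \<Rightarrow> (complex \<Rightarrow> real) \<Rightarrow> (complex \<Rightarrow> real) \<Rightarrow> (complex \<Rightarrow> complex) \<Rightarrow> complex \<Rightarrow> real" where
  "dnorm g11 g12 g22 u z =
     (let det = gdet g11 g12 g22 z; ux = dx u z; uy = dy u z
      in sqrt ((g22 z / det) * (cmod ux)\<^sup>2 - 2 * (g12 z / det) * (ux \<bullet> uy)
               + (g11 z / det) * (cmod uy)\<^sup>2))"

end

theory Submission
  imports Defs
begin

text \<open>
  Write h for the Laplacian of f. The bound on dh, together with a bound on the trace of the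
  metric over the compact disc of radius 3c/4, makes h Lipschitz there with a constant depending
  only on M and the metric. Suppose the modulus of h(p) is large for some p with |p| < c/4, and
  choose a unit complex number e with e h(p) = |h(p)|. On the closed disc B of radius r = c/4
  about p the comparison function F = e f - k |w - p|^2, with k r^2 > 2 delta, then satisfies
  Re (Laplacian F) > 0. At an interior maximum of Re F the gradient vanishes and the Hessian is
  negative semidefinite, so the Laplacian, being the trace of the Hessian against the positive
  definite inverse metric plus first-order terms, has nonpositive real part there. Hence Re F
  attains its maximum over B on the boundary circle, where Re F <= delta - k r^2 < -delta <= Re F(p),
  a contradiction. So |h(p)| is bounded by the Lipschitz constant times r plus k times a bound for
  the Laplacians of the functions |w - p|^2.
\<close>

subsection \<open>Partial derivatives and the classes \<open>C\<^sup>k\<close>\<close>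

definition coord_dir :: "bool \<Rightarrow> complex" where
  "coord_dir b = (if b then 1 else \<i>)"

definition partial :: "bool \<Rightarrow> (complex \<Rightarrow> 'a::real_normed_vector) \<Rightarrow> complex \<Rightarrow> 'a" where
  "partial b = (if b then dx else dy)"

lemma partial_simps [simp]: "partial True = dx" "partial False = dy"
  by (simp_all add: partial_def)

lemma iter_partial_Cons [simp]: "iter_partial (b # bs) u = partial b (iter_partial bs u)"
  by (simp add: partial_def)

declare iter_partial.simps(2) [simp del]

lemma iter_partial_snoc: "iter_partial (bs @ [b]) u = iter_partial bs (partial b u)"
  by (induction bs) simp_all

lemma partial_eq_vector_derivative:
  "partial b u z = vector_derivative (\<lambda>t::real. u (z + of_real t * coord_dir b)) (at 0)"
  by (cases b) (simp_all add: coord_dir_def dx_def dy_def mult.commute)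

definition partials_on :: "complex set \<Rightarrow> (complex \<Rightarrow> 'a::real_normed_vector) \<Rightarrow> bool" where
  "partials_on S u \<longleftrightarrow> continuous_on S u \<and>
     (\<forall>b. \<forall>z\<in>S. ((\<lambda>t::real. u (z + of_real t * coord_dir b))
        has_vector_derivative partial b u z) (at 0))"

fun Ck_on :: "nat \<Rightarrow> complex set \<Rightarrow> (complex \<Rightarrow> 'a::real_normed_vector) \<Rightarrow> bool" where
  "Ck_on 0 S u \<longleftrightarrow> continuous_on S u"
| "Ck_on (Suc k) S u \<longleftrightarrow> partials_on S u \<and> (\<forall>b. Ck_on k S (partial b u))"

lemma partials_on_imp_continuous_on: "partials_on S u \<Longrightarrow> continuous_on S u"
  by (simp add: partials_on_def)

lemma smooth_on_iff_partials_on: "smooth_on S u \<longleftrightarrow> (\<forall>bs. partials_on S (iter_partial bs u))"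
  unfolding smooth_on_def partials_on_def all_bool_eq
  by (auto simp: coord_dir_def mult.commute)

lemma Ck_on_iter_partial: "Ck_on (k + length bs) S u \<Longrightarrow> Ck_on k S (iter_partial bs u)"
proof (induction bs arbitrary: k)
  case (Cons b bs)
  have "Ck_on (Suc k + length bs) S u"
    using Cons.prems by (simp only: length_Cons add_Suc_shift)
  then have "Ck_on (Suc k) S (iter_partial bs u)" by (rule Cons.IH)
  then show ?case by simp
qed simp

lemma smooth_on_iff_Ck_on: "smooth_on S u \<longleftrightarrow> (\<forall>k. Ck_on k S u)"
proof
  assume "\<forall>k. Ck_on k S u"
  then have "Ck_on 1 S (iter_partial bs u)" for bs
    by (intro Ck_on_iter_partial) blast
  then show "smooth_on S u"
    unfolding smooth_on_iff_partials_on by simp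
next
  have "(\<forall>bs. partials_on S (iter_partial bs u)) \<Longrightarrow> Ck_on k S u" for k u
  proof (induction k arbitrary: u)
    case 0
    then have "partials_on S (iter_partial [] u)" by blast
    then show ?case by (simp add: partials_on_imp_continuous_on)
  next
    case (Suc k)
    have "partials_on S (iter_partial [] u)"
      using Suc.prems by blast
    moreover have "Ck_on k S (partial b u)" for b
      using Suc.IH Suc.prems by (metis iter_partial_snoc)
    ultimately show ?case by simp
  qed
  then show "smooth_on S u \<Longrightarrow> \<forall>k. Ck_on k S u"
    unfolding smooth_on_iff_partials_on by blast
qed

lemma Ck_on_imp_continuous_on: "Ck_on k S u \<Longrightarrow> continuous_on S u"
  by (cases k) (simp_all add: partials_on_def)

lemma Ck_on_Suc_imp_Ck_on: "Ck_on (Suc k) S u \<Longrightarrow> Ck_on k S u"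
  by (induction k arbitrary: u) (auto simp: partials_on_def)

lemma Ck_on_mono: "Ck_on k S u \<Longrightarrow> j \<le> k \<Longrightarrow> Ck_on j S u"
proof (induction k)
  case (Suc k)
  then show ?case using Ck_on_Suc_imp_Ck_on by (metis le_Suc_eq)
qed simp

lemma eventually_eq_on_line:
  fixes S :: "complex set"
  assumes "open S" "z \<in> S" "\<And>w. w \<in> S \<Longrightarrow> u w = v w"
  shows "eventually (\<lambda>t::real. u (z + of_real t * e) = v (z + of_real t * e)) (nhds 0)"
proof -
  have "open ((\<lambda>t::real. z + of_real t * e) -` S)"
    by (rule open_vimage[OF assms(1)]) (intro continuous_intros)
  then show ?thesis
    unfolding eventually_nhds using assms(2,3) by force
qed

lemma partial_cong:
  assumes "open S" "z \<in> S" "\<And>w. w \<in> S \<Longrightarrow> u w = v w"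
  shows "partial b u z = partial b v z"
proof -
  have "eventually (\<lambda>t::real. t \<in> UNIV \<longrightarrow>
      u (z + of_real t * coord_dir b) = v (z + of_real t * coord_dir b)) (nhds 0)"
    using eventually_eq_on_line[OF assms] by simp
  then show ?thesis
    unfolding partial_eq_vector_derivative by (rule vector_derivative_cong_eq) simp_all
qed

lemma partials_onI:
  assumes "continuous_on S u"
    and "\<And>b z. z \<in> S \<Longrightarrow> ((\<lambda>t::real. u (z + of_real t * coord_dir b)) has_vector_derivative D b z) (at 0)"
  shows "partials_on S u" and "z \<in> S \<Longrightarrow> partial b u z = D b z"
  using assms vector_derivative_at unfolding partials_on_def partial_eq_vector_derivative by metis+

lemma partials_onD:
  "partials_on S u \<Longrightarrow> z \<in> S \<Longrightarrow>
     ((\<lambda>t::real. u (z + of_real t * coord_dir b)) has_vector_derivative partial b u z) (at 0)"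
  by (simp add: partials_on_def)

lemma partials_on_cong:
  assumes "open S" "\<And>w. w \<in> S \<Longrightarrow> u w = v w" "partials_on S u"
  shows "partials_on S v"
proof (rule partials_onI)
  show "continuous_on S v"
    using assms(2) partials_on_imp_continuous_on[OF assms(3)] by (simp cong: continuous_on_cong)
  fix b z assume "z \<in> S"
  have "eventually (\<lambda>t::real. t \<in> UNIV \<longrightarrow>
      u (z + of_real t * coord_dir b) = v (z + of_real t * coord_dir b)) (nhds 0)"
    using eventually_eq_on_line[OF assms(1) \<open>z \<in> S\<close> assms(2)] by simp
  then have "((\<lambda>t::real. u (z + of_real t * coord_dir b))
        has_vector_derivative partial b u z) (at 0 within UNIV)
      \<longleftrightarrow> ((\<lambda>t::real. v (z + of_real t * coord_dir b))
        has_vector_derivative partial b u z) (at 0 within UNIV)"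
    by (rule has_vector_derivative_cong_ev) (simp add: assms(2) \<open>z \<in> S\<close>)
  then show "((\<lambda>t::real. v (z + of_real t * coord_dir b)) has_vector_derivative partial b v z) (at 0)"
    using partials_onD[OF assms(3) \<open>z \<in> S\<close>] partial_cong[OF assms(1) \<open>z \<in> S\<close> assms(2)] by simp
qed

lemma Ck_on_cong:
  assumes "open S" "\<And>w. w \<in> S \<Longrightarrow> u w = v w" "Ck_on k S u"
  shows "Ck_on k S v"
  using assms(2,3)
proof (induction k arbitrary: u v)
  case 0
  then show ?case using continuous_on_cong by force
next
  case (Suc k)
  have "partials_on S v"
    using partials_on_cong[OF assms(1) Suc.prems(1)] Suc.prems(2) by simp
  moreover have "Ck_on k S (partial b v)" for b
    using Suc partial_cong[OF assms(1)] by (metis Ck_on.simps(2))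
  ultimately show ?case by simp
qed

lemma Ck_on_SucI:
  assumes "open S" "partials_on S u" "\<And>b. Ck_on k S (D b)" "\<And>b z. z \<in> S \<Longrightarrow> partial b u z = D b z"
  shows "Ck_on (Suc k) S u"
  using assms Ck_on_cong[OF assms(1)] by (metis Ck_on.simps(2))

lemma partials_on_const:
  shows "partials_on S (\<lambda>z. c)" and "partial b (\<lambda>z. c) z = 0"
  using partials_onI[of S "\<lambda>z. c" "\<lambda>b z. 0"] by (auto simp: partial_eq_vector_derivative)

lemma partials_on_add:
  assumes "partials_on S u" "partials_on S v"
  shows "partials_on S (\<lambda>z. u z + v z)"
    and "z \<in> S \<Longrightarrow> partial b (\<lambda>z. u z + v z) z = partial b u z + partial b v z"
proof -
  have cont: "continuous_on S (\<lambda>z. u z + v z)"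
    using assms by (intro continuous_intros partials_on_imp_continuous_on)
  have deriv: "((\<lambda>t::real. u (z + of_real t * coord_dir b) + v (z + of_real t * coord_dir b))
      has_vector_derivative partial b u z + partial b v z) (at 0)" if "z \<in> S" for b z
    using assms that by (intro derivative_intros partials_onD)
  show "partials_on S (\<lambda>z. u z + v z)"
    by (rule partials_onI(1)[OF cont deriv])
  show "z \<in> S \<Longrightarrow> partial b (\<lambda>z. u z + v z) z = partial b u z + partial b v z"
    by (rule partials_onI(2)[OF cont deriv])
qed

lemma partials_on_mult:
  fixes u v :: "complex \<Rightarrow> 'a::real_normed_algebra"
  assumes "partials_on S u" "partials_on S v"
  shows "partials_on S (\<lambda>z. u z * v z)"
    and "z \<in> S \<Longrightarrow> partial b (\<lambda>z. u z * v z) z = u z * partial b v z + partial b u z * v z"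
proof -
  have cont: "continuous_on S (\<lambda>z. u z * v z)"
    using assms by (intro continuous_intros partials_on_imp_continuous_on)
  have deriv: "((\<lambda>t::real. u (z + of_real t * coord_dir b) * v (z + of_real t * coord_dir b))
      has_vector_derivative u z * partial b v z + partial b u z * v z) (at 0)" if "z \<in> S" for b z
    using has_vector_derivative_mult[OF partials_onD[OF assms(1) that] partials_onD[OF assms(2) that]]
    by simp
  show "partials_on S (\<lambda>z. u z * v z)"
    by (rule partials_onI(1)[OF cont deriv])
  show "z \<in> S \<Longrightarrow> partial b (\<lambda>z. u z * v z) z = u z * partial b v z + partial b u z * v z"
    by (rule partials_onI(2)[OF cont deriv])
qed

lemma partials_on_of_real:
  fixes g :: "complex \<Rightarrow> real"
  assumes "partials_on S g"
  shows "partials_on S (\<lambda>z. complex_of_real (g z))"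
    and "z \<in> S \<Longrightarrow> partial b (\<lambda>z. complex_of_real (g z)) z = of_real (partial b g z)"
proof -
  have cont: "continuous_on S (\<lambda>z. complex_of_real (g z))"
    using assms by (intro continuous_intros partials_on_imp_continuous_on)
  have deriv: "((\<lambda>t::real. complex_of_real (g (z + of_real t * coord_dir b)))
      has_vector_derivative of_real (partial b g z)) (at 0)" if "z \<in> S" for b z
    using partials_onD[OF assms that]
    by (intro has_vector_derivative_of_real) (simp add: has_real_derivative_iff_has_vector_derivative)
  show "partials_on S (\<lambda>z. complex_of_real (g z))"
    by (rule partials_onI(1)[OF cont deriv])
  show "z \<in> S \<Longrightarrow> partial b (\<lambda>z. complex_of_real (g z)) z = of_real (partial b g z)"
    by (rule partials_onI(2)[OF cont deriv])
qed

lemma partials_on_compose_real: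
  fixes g :: "complex \<Rightarrow> real"
  assumes "partials_on S g" "\<And>z. z \<in> S \<Longrightarrow> (\<phi> has_real_derivative \<phi>' (g z)) (at (g z))"
  shows "partials_on S (\<lambda>z. \<phi> (g z))"
    and "z \<in> S \<Longrightarrow> partial b (\<lambda>z. \<phi> (g z)) z = \<phi>' (g z) * partial b g z"
proof -
  have "continuous_on (g ` S) \<phi>"
    using assms(2) DERIV_isCont by (intro continuous_at_imp_continuous_on) blast
  then have cont: "continuous_on S (\<lambda>z. \<phi> (g z))"
    using continuous_on_compose2 partials_on_imp_continuous_on[OF assms(1)] by blast
  have deriv: "((\<lambda>t::real. \<phi> (g (z + of_real t * coord_dir b)))
      has_vector_derivative \<phi>' (g z) * partial b g z) (at 0)" if "z \<in> S" for b z
  proof -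
    have "(\<phi> has_real_derivative \<phi>' (g z)) (at ((\<lambda>t::real. g (z + of_real t * coord_dir b)) 0))"
      using assms(2)[OF that] by simp
    moreover have "((\<lambda>t::real. g (z + of_real t * coord_dir b))
        has_real_derivative partial b g z) (at 0)"
      using partials_onD[OF assms(1) that] by (simp add: has_real_derivative_iff_has_vector_derivative)
    ultimately show ?thesis
      by (metis DERIV_chain2 has_real_derivative_iff_has_vector_derivative)
  qed
  show "partials_on S (\<lambda>z. \<phi> (g z))"
    by (rule partials_onI(1)[OF cont deriv])
  show "z \<in> S \<Longrightarrow> partial b (\<lambda>z. \<phi> (g z)) z = \<phi>' (g z) * partial b g z"
    by (rule partials_onI(2)[OF cont deriv])
qed

lemma partials_on_bounded_linear:
  assumes "bounded_linear L"
  shows "partials_on S L" and "partial b L z = L (coord_dir b)"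
proof -
  have line: "((\<lambda>t::real. L (z + of_real t * coord_dir b))
      has_vector_derivative L (coord_dir b)) (at 0)" for z b
  proof -
    have "((\<lambda>t::real. z + of_real t * coord_dir b) has_vector_derivative coord_dir b) (at 0)"
      by (auto intro!: derivative_eq_intros simp: scaleR_conv_of_real[symmetric])
    then show ?thesis by (rule bounded_linear.has_vector_derivative[OF assms])
  qed
  show "partials_on S L"
    using line linear_continuous_on[OF assms] by (rule partials_onI[rotated])
  show "partial b L z = L (coord_dir b)"
    using line vector_derivative_at unfolding partial_eq_vector_derivative by metis
qed

lemma Ck_on_const: "open S \<Longrightarrow> Ck_on k S (\<lambda>z. c)"
proof (induction k arbitrary: c)
  case (Suc k)
  then show ?case
    by (intro Ck_on_SucI[where D = "\<lambda>b z. 0"]) (simp_all add: partials_on_const)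
qed simp

lemma Ck_on_add:
  assumes "open S"
  shows "Ck_on k S u \<Longrightarrow> Ck_on k S v \<Longrightarrow> Ck_on k S (\<lambda>z. u z + v z)"
proof (induction k arbitrary: u v)
  case 0
  then show ?case by (simp add: continuous_on_add)
next
  case (Suc k)
  have "partials_on S u" "partials_on S v"
    using Suc.prems by simp_all
  with Suc show ?case
    by (intro Ck_on_SucI[OF assms, where D = "\<lambda>b z. partial b u z + partial b v z"])
      (simp_all add: partials_on_add)
qed

lemma Ck_on_mult:
  fixes u v :: "complex \<Rightarrow> 'a::real_normed_algebra"
  assumes "open S"
  shows "Ck_on k S u \<Longrightarrow> Ck_on k S v \<Longrightarrow> Ck_on k S (\<lambda>z. u z * v z)"
proof (induction k arbitrary: u v)
  case 0
  then show ?case by (simp add: continuous_on_mult)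
next
  case (Suc k)
  have "partials_on S u" "partials_on S v" "Ck_on k S u" "Ck_on k S v"
    using Suc.prems Ck_on_Suc_imp_Ck_on by simp_all
  with Suc show ?case
    by (intro Ck_on_SucI[OF assms, where D = "\<lambda>b z. u z * partial b v z + partial b u z * v z"])
      (simp_all add: partials_on_mult Ck_on_add[OF assms])
qed

lemma Ck_on_diff:
  fixes u v :: "complex \<Rightarrow> 'a::real_normed_algebra_1"
  assumes "open S" "Ck_on k S u" "Ck_on k S v"
  shows "Ck_on k S (\<lambda>z. u z - v z)"
  using Ck_on_add[OF assms(1,2) Ck_on_mult[OF assms(1) Ck_on_const[OF assms(1)] assms(3)], of "- 1"]
  by simp

lemma Ck_on_dx: "Ck_on (Suc k) S u \<Longrightarrow> Ck_on k S (dx u)"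
  and Ck_on_dy: "Ck_on (Suc k) S u \<Longrightarrow> Ck_on k S (dy u)"
  using partial_simps by (metis Ck_on.simps(2))+

lemma Ck_on_minus:
  fixes u :: "complex \<Rightarrow> 'a::real_normed_algebra_1"
  assumes "open S" "Ck_on k S u"
  shows "Ck_on k S (\<lambda>z. - u z)"
proof -
  have "Ck_on k S (\<lambda>z. (- 1) * u z)"
    using assms by (intro Ck_on_mult Ck_on_const)
  then show ?thesis by simp
qed

lemma Ck_on_of_real:
  fixes g :: "complex \<Rightarrow> real"
  assumes "open S"
  shows "Ck_on k S g \<Longrightarrow> Ck_on k S (\<lambda>z. complex_of_real (g z))"
proof (induction k arbitrary: g)
  case 0
  then show ?case by (simp add: continuous_on_of_real)
next
  case (Suc k)
  then have "partials_on S g" by simp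
  with Suc show ?case
    by (intro Ck_on_SucI[OF assms, where D = "\<lambda>b z. complex_of_real (partial b g z)"])
      (simp_all add: partials_on_of_real)
qed

lemma Ck_on_bounded_linear: "open S \<Longrightarrow> bounded_linear L \<Longrightarrow> Ck_on k S L"
proof (induction k)
  case 0
  then show ?case by (simp add: linear_continuous_on)
next
  case (Suc k)
  then show ?case
    by (intro Ck_on_SucI[where D = "\<lambda>b z. L (coord_dir b)"])
      (simp_all add: partials_on_bounded_linear Ck_on_const)
qed

lemma Ck_on_inverse:
  fixes g :: "complex \<Rightarrow> real"
  assumes "open S" "\<And>z. z \<in> S \<Longrightarrow> g z \<noteq> 0"
  shows "Ck_on k S g \<Longrightarrow> Ck_on k S (\<lambda>z. inverse (g z))"
proof (induction k)
  case 0
  then show ?case using assms(2) by (auto intro!: continuous_intros)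
next
  case (Suc k)
  have g: "partials_on S g" "\<And>b. Ck_on k S (partial b g)" "Ck_on k S (\<lambda>z. inverse (g z))"
    using Suc.prems Suc.IH[OF Ck_on_Suc_imp_Ck_on[OF Suc.prems]] by simp_all
  have D: "\<And>z. z \<in> S \<Longrightarrow> (inverse has_real_derivative - (inverse (g z) ^ 2)) (at (g z))"
    using assms(2) DERIV_inverse[of "g _" UNIV] by (simp add: power2_eq_square)
  show ?case
  proof (rule Ck_on_SucI[OF assms(1) partials_on_compose_real(1)[OF g(1) D]])
    show "Ck_on k S (\<lambda>z. - 1 * (inverse (g z) * inverse (g z)) * partial b g z)" for b
      using g by (intro Ck_on_mult Ck_on_const assms(1)) simp_all
    show "partial b (\<lambda>z. inverse (g z)) z = - 1 * (inverse (g z) * inverse (g z)) * partial b g z"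
      if "z \<in> S" for b z
      using partials_on_compose_real(2)[OF g(1) D that] by (simp add: power2_eq_square)
  qed
qed

lemma Ck_on_sqrt:
  fixes g :: "complex \<Rightarrow> real"
  assumes "open S" "\<And>z. z \<in> S \<Longrightarrow> g z > 0"
  shows "Ck_on k S g \<Longrightarrow> Ck_on k S (\<lambda>z. sqrt (g z))"
proof (induction k)
  case 0
  then show ?case by (simp add: continuous_on_real_sqrt)
next
  case (Suc k)
  have g: "partials_on S g" "\<And>b. Ck_on k S (partial b g)" "Ck_on k S (\<lambda>z. sqrt (g z))"
    using Suc.prems Suc.IH[OF Ck_on_Suc_imp_Ck_on[OF Suc.prems]] by simp_all
  have D: "\<And>z. z \<in> S \<Longrightarrow> (sqrt has_real_derivative inverse (sqrt (g z)) / 2) (at (g z))"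
    using assms(2) DERIV_real_sqrt by simp
  have "Ck_on k S (\<lambda>z. inverse (sqrt (g z)))"
    using g(3) assms(2) by (intro Ck_on_inverse assms(1)) (auto simp: less_imp_neq[symmetric])
  show ?case
  proof (rule Ck_on_SucI[OF assms(1) partials_on_compose_real(1)[OF g(1) D]])
    show "Ck_on k S (\<lambda>z. inverse (sqrt (g z)) * (1 / 2) * partial b g z)" for b
      using g \<open>Ck_on k S (\<lambda>z. inverse (sqrt (g z)))\<close> by (intro Ck_on_mult Ck_on_const assms(1)) simp_all
    show "partial b (\<lambda>z. sqrt (g z)) z = inverse (sqrt (g z)) * (1 / 2) * partial b g z"
      if "z \<in> S" for b z
      using partials_on_compose_real(2)[OF g(1) D that] by simp
  qed
qed

subsection \<open>Differentiability and the mean value inequality\<close>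

lemma partials_on_line_derivative:
  assumes "partials_on S u" "w + of_real s * coord_dir b \<in> S"
  shows "((\<lambda>t::real. u (w + of_real t * coord_dir b)) has_vector_derivative
           partial b u (w + of_real s * coord_dir b)) (at s)"
proof -
  have "((\<lambda>t::real. t - s) has_vector_derivative 1) (at s)"
    by (auto intro!: derivative_eq_intros)
  moreover have "((\<lambda>t::real. u (w + of_real s * coord_dir b + of_real t * coord_dir b))
      has_vector_derivative partial b u (w + of_real s * coord_dir b)) (at ((\<lambda>t. t - s) s))"
    using partials_onD[OF assms, of b] by simp
  ultimately have "((\<lambda>t::real. u (w + of_real s * coord_dir b + of_real t * coord_dir b)) \<circ> (\<lambda>t. t - s)
      has_vector_derivative 1 *\<^sub>R partial b u (w + of_real s * coord_dir b)) (at s)"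
    by (rule vector_diff_chain_at)
  moreover have "(\<lambda>t::real. u (w + of_real s * coord_dir b + of_real t * coord_dir b)) \<circ> (\<lambda>t. t - s)
      = (\<lambda>t. u (w + of_real t * coord_dir b))"
    by (simp add: fun_eq_iff algebra_simps)
  ultimately show ?thesis
    by simp
qed

lemma vector_derivative_increment_bound:
  fixes f :: "real \<Rightarrow> 'a::real_normed_vector"
  assumes "\<And>t. \<bar>t\<bar> \<le> \<bar>s\<bar> \<Longrightarrow> (f has_vector_derivative f' t) (at t)"
    and "\<And>t. \<bar>t\<bar> \<le> \<bar>s\<bar> \<Longrightarrow> norm (f' t - c) \<le> e"
  shows "norm (f s - f 0 - s *\<^sub>R c) \<le> e * \<bar>s\<bar>"
proof -
  have seg: "\<bar>t\<bar> \<le> \<bar>s\<bar>" if "t \<in> closed_segment 0 s" for t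
    using that by (auto simp: closed_segment_eq_real_ivl split: if_splits)
  have "norm ((f s - s *\<^sub>R c) - (f 0 - 0 *\<^sub>R c)) \<le> e * norm (s - 0)"
  proof (rule differentiable_bound[where f' = "\<lambda>t h. h *\<^sub>R (f' t - c)"])
    fix t assume t: "t \<in> closed_segment 0 s"
    have "((\<lambda>t. f t - t *\<^sub>R c) has_vector_derivative f' t - c) (at t)"
      using assms(1)[OF seg[OF t]] by (auto intro!: derivative_eq_intros)
    then show "((\<lambda>t. f t - t *\<^sub>R c) has_derivative (\<lambda>h. h *\<^sub>R (f' t - c)))
        (at t within closed_segment 0 s)"
      unfolding has_vector_derivative_def by (rule has_derivative_at_withinI)
    show "onorm (\<lambda>h. h *\<^sub>R (f' t - c)) \<le> e"
      using assms(2)[OF seg[OF t]] by (intro onorm_le) (simp add: mult.commute[of e] mult_left_mono)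
  qed simp_all
  then show ?thesis
    by (simp add: algebra_simps)
qed

lemma partial_increment_bound:
  assumes "partials_on S u"
    and "\<And>t. \<bar>t\<bar> \<le> \<bar>s\<bar> \<Longrightarrow> w + of_real t * coord_dir b \<in> S \<and>
           norm (partial b u (w + of_real t * coord_dir b) - c) \<le> e"
  shows "norm (u (w + of_real s * coord_dir b) - u w - s *\<^sub>R c) \<le> e * \<bar>s\<bar>"
proof -
  have "norm ((\<lambda>t. u (w + of_real t * coord_dir b)) s - (\<lambda>t. u (w + of_real t * coord_dir b)) 0
      - s *\<^sub>R c)
      \<le> e * \<bar>s\<bar>"
    by (rule vector_derivative_increment_bound)
       (use partials_on_line_derivative[OF assms(1)] assms(2) in blast)+
  then show ?thesis by simp
qed

lemma Ck_on_1_has_derivative: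
  assumes "open S" "Ck_on 1 S u" "z \<in> S"
  shows "(u has_derivative (\<lambda>h. Re h *\<^sub>R dx u z + Im h *\<^sub>R dy u z)) (at z)"
  unfolding has_derivative_at_alt
proof (intro conjI allI impI)
  show "bounded_linear (\<lambda>h. Re h *\<^sub>R dx u z + Im h *\<^sub>R dy u z)"
    by (intro bounded_linear_add bounded_linear_compose[OF bounded_linear_scaleR_left]
        bounded_linear_Re bounded_linear_Im)
  fix e :: real assume "e > 0"
  have u: "partials_on S u" "\<And>b. continuous_on S (partial b u)"
    using assms(2) by simp_all
  obtain d0 where "d0 > 0" "ball z d0 \<subseteq> S"
    using assms(1,3) open_contains_ball by blast
  have "\<exists>d>0. \<forall>y\<in>S. dist y z < d \<longrightarrow> dist (partial b u y) (partial b u z) < e / 2" for b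
    using u(2)[of b] assms(3) \<open>e > 0\<close> unfolding continuous_on_iff by (metis half_gt_zero)
  then obtain d1 d2 where "d1 > 0" "d2 > 0"
    and d1: "\<forall>y\<in>S. dist y z < d1 \<longrightarrow> dist (partial True u y) (partial True u z) < e / 2"
    and d2: "\<forall>y\<in>S. dist y z < d2 \<longrightarrow> dist (partial False u y) (partial False u z) < e / 2"
    by meson
  define d where "d = min d0 (min d1 d2)"
  have near: "y \<in> S \<and> norm (partial b u y - partial b u z) \<le> e / 2" if "cmod (y - z) < d" for y b
  proof -
    have "y \<in> S"
      using that \<open>ball z d0 \<subseteq> S\<close> by (auto simp: d_def dist_norm norm_minus_commute)
    then show ?thesis
      using that d1 d2 by (cases b) (auto simp: d_def dist_norm)
  qed
  show "\<exists>d>0. \<forall>y. norm (y - z) < d \<longrightarrow>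
      norm (u y - u z - (Re (y - z) *\<^sub>R dx u z + Im (y - z) *\<^sub>R dy u z)) \<le> e * norm (y - z)"
  proof (intro exI[of _ d] conjI allI impI)
    show "d > 0"
      using \<open>d0 > 0\<close> \<open>d1 > 0\<close> \<open>d2 > 0\<close> by (simp add: d_def)
    fix y assume "norm (y - z) < d"
    define h where "h = y - z"
    define m where "m = z + of_real (Re h) * coord_dir True"
    have horizontal: "norm (u m - u z - Re h *\<^sub>R dx u z) \<le> e / 2 * \<bar>Re h\<bar>"
      unfolding m_def
    proof (rule partial_increment_bound[OF u(1)])
      fix t :: real assume "\<bar>t\<bar> \<le> \<bar>Re h\<bar>"
      then have "cmod (z + of_real t * coord_dir True - z) < d"
        using abs_Re_le_cmod[of h] \<open>norm (y - z) < d\<close> by (simp add: coord_dir_def h_def)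
      then show "z + of_real t * coord_dir True \<in> S \<and>
          norm (partial True u (z + of_real t * coord_dir True) - dx u z) \<le> e / 2"
        using near[of "z + of_real t * coord_dir True" True] by simp
    qed
    have vertical: "norm (u y - u m - Im h *\<^sub>R dy u z) \<le> e / 2 * \<bar>Im h\<bar>"
    proof -
      have "y = m + of_real (Im h) * coord_dir False"
        by (simp add: m_def h_def coord_dir_def complex_eq_iff)
      moreover have "norm (u (m + of_real (Im h) * coord_dir False) - u m - Im h *\<^sub>R dy u z)
          \<le> e / 2 * \<bar>Im h\<bar>"
      proof (rule partial_increment_bound[OF u(1)])
        fix t :: real assume "\<bar>t\<bar> \<le> \<bar>Im h\<bar>"
        then have "cmod (m + of_real t * coord_dir False - z) \<le> cmod h"
          by (simp add: m_def coord_dir_def cmod_def abs_le_square_iff)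
        then have "cmod (m + of_real t * coord_dir False - z) < d"
          using \<open>norm (y - z) < d\<close> by (simp add: h_def)
        then show "m + of_real t * coord_dir False \<in> S \<and>
            norm (partial False u (m + of_real t * coord_dir False) - dy u z) \<le> e / 2"
          using near[of "m + of_real t * coord_dir False" False] by simp
      qed
      ultimately show ?thesis by simp
    qed
    have "norm (u y - u z - (Re h *\<^sub>R dx u z + Im h *\<^sub>R dy u z))
        \<le> norm (u y - u m - Im h *\<^sub>R dy u z) + norm (u m - u z - Re h *\<^sub>R dx u z)"
      by (rule order_trans[OF _ norm_triangle_ineq]) (simp add: algebra_simps)
    also have "\<dots> \<le> e / 2 * \<bar>Im h\<bar> + e / 2 * \<bar>Re h\<bar>"
      using horizontal vertical by simp
    also have "\<dots> \<le> e / 2 * (2 * cmod h)"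
      unfolding distrib_left[symmetric] using \<open>e > 0\<close> abs_Re_le_cmod[of h] abs_Im_le_cmod[of h]
      by (intro mult_left_mono) simp_all
    finally show "norm (u y - u z - (Re (y - z) *\<^sub>R dx u z + Im (y - z) *\<^sub>R dy u z)) \<le> e * norm (y - z)"
      by (simp add: h_def)
  qed
qed

lemma Ck_on_1_lipschitz:
  assumes "open S" "Ck_on 1 S u" "convex K" "K \<subseteq> S"
    and "\<And>w. w \<in> K \<Longrightarrow> norm (dx u w) + norm (dy u w) \<le> B"
    and "x \<in> K" "y \<in> K"
  shows "norm (u x - u y) \<le> B * cmod (x - y)"
proof (rule differentiable_bound[OF assms(3) _ _ assms(6,7)])
  fix w assume "w \<in> K"
  then show "(u has_derivative (\<lambda>h. Re h *\<^sub>R dx u w + Im h *\<^sub>R dy u w)) (at w within K)"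
    using Ck_on_1_has_derivative[OF assms(1,2)] assms(4) by (auto intro: has_derivative_at_withinI)
  show "onorm (\<lambda>h. Re h *\<^sub>R dx u w + Im h *\<^sub>R dy u w) \<le> B"
  proof (rule onorm_le)
    fix h
    have "norm (Re h *\<^sub>R dx u w + Im h *\<^sub>R dy u w) \<le> \<bar>Re h\<bar> * norm (dx u w) + \<bar>Im h\<bar> * norm (dy u w)"
      by (rule order_trans[OF norm_triangle_ineq]) simp
    also have "\<dots> \<le> cmod h * norm (dx u w) + cmod h * norm (dy u w)"
      by (intro add_mono mult_right_mono abs_Re_le_cmod abs_Im_le_cmod) simp_all
    also have "\<dots> \<le> cmod h * B"
      unfolding distrib_left[symmetric] using assms(5)[OF \<open>w \<in> K\<close>] by (rule mult_left_mono) simp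
    finally show "norm (Re h *\<^sub>R dx u w + Im h *\<^sub>R dy u w) \<le> B * norm h"
      by (simp add: mult.commute)
  qed
qed

subsection \<open>The Laplace--Beltrami operator\<close>

lemma riem_metric_on_pos:
  assumes "riem_metric_on S g11 g12 g22" "z \<in> S"
  shows "gdet g11 g12 g22 z > 0" "g11 z > 0" "g22 z > 0"
proof -
  show "gdet g11 g12 g22 z > 0" "g11 z > 0"
    using assms unfolding riem_metric_on_def gdet_def by auto
  moreover have "g11 z * g22 z > (g12 z)\<^sup>2"
    using assms unfolding riem_metric_on_def by auto
  then have "g11 z * g22 z > 0"
    using zero_le_power2[of "g12 z"] by linarith
  ultimately show "g22 z > 0"
    using zero_less_mult_pos by blast
qed

lemma Ck_on_metric_coeffs:
  assumes "open S" "riem_metric_on S g11 g12 g22"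
  shows "Ck_on k S (\<lambda>z. sqrt (gdet g11 g12 g22 z))" "Ck_on k S (\<lambda>z. 1 / sqrt (gdet g11 g12 g22 z))"
    "Ck_on k S (\<lambda>z. g11 z / gdet g11 g12 g22 z)" "Ck_on k S (\<lambda>z. g12 z / gdet g11 g12 g22 z)"
    "Ck_on k S (\<lambda>z. - g12 z / gdet g11 g12 g22 z)" "Ck_on k S (\<lambda>z. g22 z / gdet g11 g12 g22 z)"
proof -
  have g: "Ck_on k S g11" "Ck_on k S g12" "Ck_on k S g22"
    using assms(2) unfolding riem_metric_on_def smooth_on_iff_Ck_on by blast+
  have "gdet g11 g12 g22 = (\<lambda>z. g11 z * g22 z - g12 z * g12 z)"
    by (simp add: fun_eq_iff gdet_def power2_eq_square)
  then have D: "Ck_on k S (gdet g11 g12 g22)"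
    using g by (simp add: Ck_on_diff Ck_on_mult assms(1))
  have pos: "\<And>z. z \<in> S \<Longrightarrow> gdet g11 g12 g22 z > 0"
    using riem_metric_on_pos[OF assms(2)] by blast
  have inv: "Ck_on k S (\<lambda>z. inverse (gdet g11 g12 g22 z))"
    using pos by (intro Ck_on_inverse[OF assms(1) _ D]) (simp add: less_imp_neq[symmetric])
  show sqrt: "Ck_on k S (\<lambda>z. sqrt (gdet g11 g12 g22 z))"
    using pos by (rule Ck_on_sqrt[OF assms(1) _ D])
  have "Ck_on k S (\<lambda>z. inverse (sqrt (gdet g11 g12 g22 z)))"
    using pos by (intro Ck_on_inverse[OF assms(1) _ sqrt]) (simp add: less_imp_neq[symmetric])
  then show "Ck_on k S (\<lambda>z. 1 / sqrt (gdet g11 g12 g22 z))"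
    by (simp add: divide_inverse)
  show "Ck_on k S (\<lambda>z. g11 z / gdet g11 g12 g22 z)" "Ck_on k S (\<lambda>z. g12 z / gdet g11 g12 g22 z)"
    "Ck_on k S (\<lambda>z. - g12 z / gdet g11 g12 g22 z)" "Ck_on k S (\<lambda>z. g22 z / gdet g11 g12 g22 z)"
    unfolding divide_inverse using g inv by (simp_all add: Ck_on_mult Ck_on_minus assms(1))
qed

lemma Ck_on_laplacian:
  assumes "open S" "riem_metric_on S g11 g12 g22" "Ck_on (Suc (Suc k)) S f"
  shows "Ck_on k S (laplacian g11 g12 g22 f)"
proof -
  note coeffs = Ck_on_metric_coeffs[OF assms(1,2)]
  have f: "Ck_on (Suc k) S (dx f)" "Ck_on (Suc k) S (dy f)"
    using Ck_on_dx[OF assms(3)] Ck_on_dy[OF assms(3)] .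
  show ?thesis
    unfolding laplacian_def Let_def
    by (intro Ck_on_mult Ck_on_of_real Ck_on_add Ck_on_diff Ck_on_dx Ck_on_dy coeffs f assms(1))
qed

lemma partial_real_combination:
  fixes a c :: "complex \<Rightarrow> real" and u v :: "complex \<Rightarrow> complex"
  assumes "partials_on S a" "partials_on S c" "partials_on S u" "partials_on S v" "z \<in> S"
  shows "partial b (\<lambda>w. of_real (a w) * u w + of_real (c w) * v w) z =
    of_real (a z) * partial b u z + of_real (partial b a z) * u z +
    of_real (c z) * partial b v z + of_real (partial b c z) * v z"
proof -
  note a = partials_on_of_real[OF assms(1)] and c = partials_on_of_real[OF assms(2)]
  show ?thesis
    using partials_on_add(2)[OF partials_on_mult(1)[OF a(1) assms(3)]
        partials_on_mult(1)[OF c(1) assms(4)] assms(5)]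
      partials_on_mult(2)[OF a(1) assms(3,5)] partials_on_mult(2)[OF c(1) assms(4,5)]
      a(2)[OF assms(5)] c(2)[OF assms(5)]
    by simp
qed

lemma laplacian_second_order_form:
  assumes "open S" "riem_metric_on S g11 g12 g22" "z \<in> S"
  obtains \<beta>1 \<beta>2 :: real where
    "\<And>f. Ck_on 2 S f \<Longrightarrow> laplacian g11 g12 g22 f z =
       of_real (g22 z / gdet g11 g12 g22 z) * dx (dx f) z
       - of_real (g12 z / gdet g11 g12 g22 z) * (dx (dy f) z + dy (dx f) z)
       + of_real (g11 z / gdet g11 g12 g22 z) * dy (dy f) z
       + of_real \<beta>1 * dx f z + of_real \<beta>2 * dy f z"
proof -
  define D where "D = gdet g11 g12 g22"
  define s where "s = (\<lambda>w. sqrt (D w))"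
  \<comment> \<open>\<open>a\<^sub>i\<^sub>j = sqrt (det g) g\<^sup>i\<^sup>j\<close>, the coefficients of the divergence form of the Laplacian\<close>
  define a11 where "a11 = (\<lambda>w. s w * (g22 w / D w))"
  define a12 where "a12 = (\<lambda>w. - (s w * (g12 w / D w)))"
  define a21 where "a21 = (\<lambda>w. s w * (- g12 w / D w))"
  define a22 where "a22 = (\<lambda>w. s w * (g11 w / D w))"
  note coeffs = Ck_on_metric_coeffs[OF assms(1,2), of 1, folded D_def]
  have "Ck_on 1 S a11" "Ck_on 1 S a12" "Ck_on 1 S a21" "Ck_on 1 S a22"
    unfolding a11_def a12_def a21_def a22_def s_def
    by (intro Ck_on_mult Ck_on_minus coeffs assms(1))+
  then have a: "partials_on S a11" "partials_on S a12" "partials_on S a21" "partials_on S a22"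
    by simp_all
  have "D z > 0" "s z > 0"
    using riem_metric_on_pos(1)[OF assms(2,3)] by (simp_all add: s_def D_def)
  define \<beta>1 where "\<beta>1 = (dx a11 z + dy a21 z) / s z"
  define \<beta>2 where "\<beta>2 = (dx a12 z + dy a22 z) / s z"
  show thesis
  proof (rule that[of \<beta>1 \<beta>2])
    fix f :: "complex \<Rightarrow> complex" assume "Ck_on 2 S f"
    then have "Ck_on 1 S (dx f)" "Ck_on 1 S (dy f)"
      by (metis Ck_on_dx Suc_1, metis Ck_on_dy Suc_1)
    then have f: "partials_on S (dx f)" "partials_on S (dy f)"
      by simp_all
    have X: "(\<lambda>w. of_real (sqrt (D w)) *
          (of_real (g22 w / D w) * dx f w - of_real (g12 w / D w) * dy f w))
        = (\<lambda>w. of_real (a11 w) * dx f w + of_real (a12 w) * dy f w)"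
      by (simp add: fun_eq_iff a11_def a12_def s_def algebra_simps)
    have Y: "(\<lambda>w. of_real (sqrt (D w)) *
          (of_real (- g12 w / D w) * dx f w + of_real (g11 w / D w) * dy f w))
        = (\<lambda>w. of_real (a21 w) * dx f w + of_real (a22 w) * dy f w)"
      by (simp add: fun_eq_iff a21_def a22_def s_def algebra_simps)
    have "laplacian g11 g12 g22 f z = of_real (1 / s z) *
        (dx (\<lambda>w. of_real (a11 w) * dx f w + of_real (a12 w) * dy f w) z +
         dy (\<lambda>w. of_real (a21 w) * dx f w + of_real (a22 w) * dy f w) z)"
      unfolding laplacian_def Let_def D_def[symmetric] X Y s_def ..
    also have "\<dots> = of_real (1 / s z) *
        (of_real (a11 z) * dx (dx f) z + of_real (dx a11 z) * dx f z +
         of_real (a12 z) * dx (dy f) z + of_real (dx a12 z) * dy f z +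
         (of_real (a21 z) * dy (dx f) z + of_real (dy a21 z) * dx f z +
          of_real (a22 z) * dy (dy f) z + of_real (dy a22 z) * dy f z))"
      using partial_real_combination[OF a(1,2) f assms(3), of True]
        partial_real_combination[OF a(3,4) f assms(3), of False] by simp
    also have "\<dots> = of_real (g22 z / D z) * dx (dx f) z
       - of_real (g12 z / D z) * (dx (dy f) z + dy (dx f) z)
       + of_real (g11 z / D z) * dy (dy f) z
       + of_real \<beta>1 * dx f z + of_real \<beta>2 * dy f z"
      using \<open>D z > 0\<close> \<open>s z > 0\<close> by (simp add: a11_def a12_def a21_def a22_def \<beta>1_def \<beta>2_def field_simps)
    finally show "laplacian g11 g12 g22 f z = of_real (g22 z / gdet g11 g12 g22 z) * dx (dx f) z
       - of_real (g12 z / gdet g11 g12 g22 z) * (dx (dy f) z + dy (dx f) z)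
       + of_real (g11 z / gdet g11 g12 g22 z) * dy (dy f) z
       + of_real \<beta>1 * dx f z + of_real \<beta>2 * dy f z"
      by (simp add: D_def)
  qed
qed

lemma partial_linear_combination:
  fixes u v :: "complex \<Rightarrow> 'a::real_normed_algebra"
  assumes "partials_on S u" "partials_on S v" "z \<in> S"
  shows "partial b (\<lambda>w. a * u w + c * v w) z = a * partial b u z + c * partial b v z"
proof -
  have au: "partials_on S (\<lambda>w. a * u w)" and cv: "partials_on S (\<lambda>w. c * v w)"
    using partials_on_mult(1)[OF partials_on_const(1) assms(1)]
      partials_on_mult(1)[OF partials_on_const(1) assms(2)] by simp_all
  show ?thesis
    using assms(3) partials_on_add(2)[OF au cv] partials_on_mult(2)[OF partials_on_const(1) assms(1)]
      partials_on_mult(2)[OF partials_on_const(1) assms(2)] by (simp add: partials_on_const(2))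
qed

lemma iter_partial_linear_combination:
  fixes u v :: "complex \<Rightarrow> 'a::real_normed_algebra"
  assumes "open S"
  shows "Ck_on (length bs) S u \<Longrightarrow> Ck_on (length bs) S v \<Longrightarrow> z \<in> S \<Longrightarrow>
    iter_partial bs (\<lambda>w. a * u w + c * v w) z = a * iter_partial bs u z + c * iter_partial bs v z"
proof (induction bs arbitrary: z)
  case (Cons b bs)
  have "Ck_on (length bs) S u" "Ck_on (length bs) S v"
    using Cons.prems(1,2) by (metis Ck_on_Suc_imp_Ck_on length_Cons)+
  then have IH: "\<And>w. w \<in> S \<Longrightarrow> iter_partial bs (\<lambda>w. a * u w + c * v w) w =
      a * iter_partial bs u w + c * iter_partial bs v w"
    using Cons.IH by blast
  have "Ck_on 1 S (iter_partial bs u)" "Ck_on 1 S (iter_partial bs v)"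
    using Cons.prems(1,2) by (metis Ck_on_iter_partial length_Cons plus_1_eq_Suc)+
  then have "partials_on S (iter_partial bs u)" "partials_on S (iter_partial bs v)"
    by simp_all
  then show ?case
    using partial_cong[OF assms Cons.prems(3) IH] partial_linear_combination Cons.prems(3)
    by simp
qed simp

lemma laplacian_linear_combination:
  assumes "open S" "riem_metric_on S g11 g12 g22" "Ck_on 2 S u" "Ck_on 2 S v" "z \<in> S"
  shows "laplacian g11 g12 g22 (\<lambda>w. a * u w + c * v w) z =
    a * laplacian g11 g12 g22 u z + c * laplacian g11 g12 g22 v z"
proof -
  obtain \<beta>1 \<beta>2 where L: "\<And>f. Ck_on 2 S f \<Longrightarrow> laplacian g11 g12 g22 f z =
       of_real (g22 z / gdet g11 g12 g22 z) * dx (dx f) z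
       - of_real (g12 z / gdet g11 g12 g22 z) * (dx (dy f) z + dy (dx f) z)
       + of_real (g11 z / gdet g11 g12 g22 z) * dy (dy f) z
       + of_real \<beta>1 * dx f z + of_real \<beta>2 * dy f z"
    using laplacian_second_order_form[OF assms(1,2,5)] by blast
  have F: "Ck_on 2 S (\<lambda>w. a * u w + c * v w)"
    using assms(3,4) by (intro Ck_on_add Ck_on_mult Ck_on_const assms(1))
  have lin: "iter_partial bs (\<lambda>w. a * u w + c * v w) z =
      a * iter_partial bs u z + c * iter_partial bs v z"
    if "length bs \<le> 2" for bs
    using that assms by (intro iter_partial_linear_combination) (auto intro: Ck_on_mono)
  define A where "A = complex_of_real (g22 z / gdet g11 g12 g22 z)"
  define B where "B = complex_of_real (g12 z / gdet g11 g12 g22 z)"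
  define C where "C = complex_of_real (g11 z / gdet g11 g12 g22 z)"
  show ?thesis
    unfolding L[OF F, folded A_def B_def C_def] L[OF assms(3), folded A_def B_def C_def]
      L[OF assms(4), folded A_def B_def C_def]
    using lin[of "[True]"] lin[of "[False]"] lin[of "[True, True]"]
      lin[of "[True, False]"] lin[of "[False, True]"] lin[of "[False, False]"]
    by (simp add: algebra_simps)
qed

lemma laplacian_const: "laplacian g11 g12 g22 (\<lambda>w. c) z = 0"
proof -
  have "dx (\<lambda>w. c') = (\<lambda>w. 0)" "dy (\<lambda>w. c') = (\<lambda>w. 0)" for c' :: complex
    using partials_on_const(2)[of True c'] partials_on_const(2)[of False c'] by auto
  then show ?thesis
    unfolding laplacian_def Let_def by simp
qed

subsection \<open>The maximum principle\<close>

lemma local_max_second_derivative_nonpos: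
  fixes \<phi> \<phi>' :: "real \<Rightarrow> real"
  assumes "d > 0"
    and "\<And>t. \<bar>t\<bar> < d \<Longrightarrow> (\<phi> has_real_derivative \<phi>' t) (at t)"
    and "(\<phi>' has_real_derivative l) (at 0)"
    and "\<And>t. \<bar>t\<bar> < d \<Longrightarrow> \<phi> t \<le> \<phi> 0"
  shows "l \<le> 0"
proof (rule ccontr)
  assume "\<not> l \<le> 0"
  have "\<phi>' 0 = 0"
    by (rule DERIV_local_max[OF assms(2)[of 0] assms(1)]) (use assms in auto)
  obtain d' where "d' > 0" and incr: "\<And>h. 0 < h \<Longrightarrow> h < d' \<Longrightarrow> \<phi>' 0 < \<phi>' (0 + h)"
    using DERIV_pos_inc_right[OF assms(3)] \<open>\<not> l \<le> 0\<close> by force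
  define h where "h = min d d' / 2"
  have h: "0 < h" "h < d" "h < d'"
    using assms(1) \<open>d' > 0\<close> by (auto simp: h_def)
  obtain \<xi> where \<xi>: "0 < \<xi>" "\<xi> < h" "\<phi> h - \<phi> 0 = (h - 0) * \<phi>' \<xi>"
    using MVT2[OF h(1), of \<phi> \<phi>'] assms(2) h by force
  have "\<phi>' \<xi> > 0"
    using incr[of \<xi>] \<open>\<phi>' 0 = 0\<close> \<xi>(1,2) h by simp
  then have "(h - 0) * \<phi>' \<xi> > 0"
    using h(1) by simp
  then have "\<phi> h > \<phi> 0"
    using \<xi>(3) by linarith
  with assms(4)[of h] h show False by simp
qed

lemma has_real_derivative_along_line:
  fixes w :: "complex \<Rightarrow> real"
  assumes "(w has_derivative L) (at (q + t *\<^sub>R v))"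
  shows "((\<lambda>t. w (q + t *\<^sub>R v)) has_real_derivative L v) (at t)"
proof -
  have "((\<lambda>t. q + t *\<^sub>R v) has_derivative (\<lambda>s. s *\<^sub>R v)) (at t)"
    by (auto intro!: derivative_eq_intros)
  from has_derivative_compose[OF this assms]
  have "((\<lambda>t. w (q + t *\<^sub>R v)) has_derivative (\<lambda>s. L (s *\<^sub>R v))) (at t)" .
  moreover have "(\<lambda>s. L (s *\<^sub>R v)) = (*) (L v)"
    using linear_cmul[OF has_derivative_linear[OF assms]] by (simp add: fun_eq_iff)
  ultimately show ?thesis
    by (simp add: has_field_derivative_def)
qed

lemma Ck_on_1_Re_has_derivative:
  assumes "open S" "Ck_on 1 S G" "z \<in> S"
  shows "((\<lambda>w. Re (G w)) has_derivative (\<lambda>h. Re h * Re (dx G z) + Im h * Re (dy G z))) (at z)"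
  using has_derivative_Re[OF Ck_on_1_has_derivative[OF assms]] by simp

lemma local_max_Re_second_order:
  fixes G :: "complex \<Rightarrow> complex"
  assumes "open S" "Ck_on 2 S G" "r > 0" "ball q r \<subseteq> S"
    and "\<And>w. w \<in> ball q r \<Longrightarrow> Re (G w) \<le> Re (G q)"
  shows "Re (dx G q) = 0" "Re (dy G q) = 0"
    "\<alpha>\<^sup>2 * Re (dx (dx G) q) + \<alpha> * \<beta> * (Re (dx (dy G) q) + Re (dy (dx G) q)) + \<beta>\<^sup>2 * Re (dy (dy G) q) \<le> 0"
proof -
  have "Ck_on (Suc 1) S G"
    using assms(2) by (simp add: numeral_2_eq_2)
  then have G: "Ck_on 1 S G" "Ck_on 1 S (dx G)" "Ck_on 1 S (dy G)"
    using Ck_on_Suc_imp_Ck_on Ck_on_dx Ck_on_dy by blast+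
  have "q \<in> S"
    using assms(3,4) by auto
  define \<rho> where "\<rho> v = r / (cmod v + 1)" for v
  have \<rho>: "\<rho> v > 0" for v
    using assms(3) by (simp add: \<rho>_def add_nonneg_pos)
  have near: "q + t *\<^sub>R v \<in> ball q r" if "\<bar>t\<bar> < \<rho> v" for t v
  proof -
    have pos: "cmod v + 1 > 0"
      by (simp add: add_nonneg_pos)
    have "\<bar>t\<bar> * cmod v \<le> \<bar>t\<bar> * (cmod v + 1)"
      by (simp add: mult_left_mono)
    also have "\<dots> < r"
      using that pos_less_divide_eq[OF pos] unfolding \<rho>_def by blast
    finally show ?thesis by (simp add: dist_norm)
  qed
  have line: "((\<lambda>t. Re (G (q + t *\<^sub>R v))) has_real_derivative
      Re v * Re (dx G (q + t *\<^sub>R v)) + Im v * Re (dy G (q + t *\<^sub>R v))) (at t)"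
    if "\<bar>t\<bar> < \<rho> v" for t v
    using Ck_on_1_Re_has_derivative[OF assms(1) G(1)] near[OF that] assms(4)
    by (intro has_real_derivative_along_line) auto
  have max: "Re (G (q + t *\<^sub>R v)) \<le> Re (G (q + 0 *\<^sub>R v))" if "\<bar>t\<bar> < \<rho> v" for t v
    using assms(5) near[OF that] by simp
  have first: "Re v * Re (dx G q) + Im v * Re (dy G q) = 0" for v
    using DERIV_local_max[OF line[of 0 v] \<rho>[of v]] max \<rho>[of v] by simp
  show "Re (dx G q) = 0" "Re (dy G q) = 0"
    using first[of 1] first[of \<i>] by simp_all
  define v where "v = Complex \<alpha> \<beta>"
  have second: "((\<lambda>t. Re v * Re (dx G (q + t *\<^sub>R v)) + Im v * Re (dy G (q + t *\<^sub>R v)))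
      has_real_derivative
      Re v * (Re v * Re (dx (dx G) q) + Im v * Re (dy (dx G) q)) +
      Im v * (Re v * Re (dx (dy G) q) + Im v * Re (dy (dy G) q))) (at 0)"
    using Ck_on_1_Re_has_derivative[OF assms(1) G(2) \<open>q \<in> S\<close>]
      Ck_on_1_Re_has_derivative[OF assms(1) G(3) \<open>q \<in> S\<close>]
    by (intro DERIV_add DERIV_cmult has_real_derivative_along_line) simp_all
  have "Re v * (Re v * Re (dx (dx G) q) + Im v * Re (dy (dx G) q)) +
      Im v * (Re v * Re (dx (dy G) q) + Im v * Re (dy (dy G) q)) \<le> 0"
    by (rule local_max_second_derivative_nonpos[OF \<rho> line second max])
  then show "\<alpha>\<^sup>2 * Re (dx (dx G) q) + \<alpha> * \<beta> * (Re (dx (dy G) q) + Re (dy (dx G) q))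
      + \<beta>\<^sup>2 * Re (dy (dy G) q) \<le> 0"
    by (simp add: v_def power2_eq_square algebra_simps)
qed

text \<open>\<open>tr (A H) \<le> 0\<close> for the positive definite \<open>A = [[a, -b], [-b, c]]\<close> and the negative
  semidefinite \<open>H = [[P, m/2], [m/2, R]]\<close>.\<close>

lemma nonpos_quadratic_form_trace:
  fixes a b c P m R :: real
  assumes "a > 0" "a * c - b\<^sup>2 > 0"
    and "\<And>\<alpha> \<beta>. \<alpha>\<^sup>2 * P + \<alpha> * \<beta> * m + \<beta>\<^sup>2 * R \<le> 0"
  shows "a * P - b * m + c * R \<le> 0"
proof -
  have "R \<le> 0"
    using assms(3)[of 0 1] by simp
  have "P - (b / a) * m + (b / a)\<^sup>2 * R \<le> 0"
    using assms(3)[of 1 "- b / a"] by simp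
  then have "a * P - b * m + (b\<^sup>2 / a) * R \<le> 0"
    using assms(1) mult_left_mono[of _ 0 a]
    by (fastforce simp: algebra_simps power2_eq_square)
  moreover have "(c - b\<^sup>2 / a) * R \<le> 0"
    using assms(1,2) \<open>R \<le> 0\<close> by (intro mult_nonneg_nonpos) (simp_all add: field_simps)
  ultimately show ?thesis
    by (simp add: algebra_simps)
qed

lemma laplacian_Re_nonpos_at_local_max:
  assumes "open S" "riem_metric_on S g11 g12 g22" "Ck_on 2 S G" "r > 0" "ball q r \<subseteq> S"
    and "\<And>w. w \<in> ball q r \<Longrightarrow> Re (G w) \<le> Re (G q)"
  shows "Re (laplacian g11 g12 g22 G q) \<le> 0"
proof -
  have "q \<in> S"
    using assms(4,5) by auto
  then obtain \<beta>1 \<beta>2 where L: "laplacian g11 g12 g22 G q =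
       of_real (g22 q / gdet g11 g12 g22 q) * dx (dx G) q
       - of_real (g12 q / gdet g11 g12 g22 q) * (dx (dy G) q + dy (dx G) q)
       + of_real (g11 q / gdet g11 g12 g22 q) * dy (dy G) q
       + of_real \<beta>1 * dx G q + of_real \<beta>2 * dy G q"
    using laplacian_second_order_form[OF assms(1,2)] assms(3) by metis
  note crit = local_max_Re_second_order[OF assms(1,3,4,5,6)]
  define d where "d = gdet g11 g12 g22 q"
  have "d > 0" and "g22 q > 0"
    using riem_metric_on_pos[OF assms(2) \<open>q \<in> S\<close>] by (simp_all add: d_def)
  have "g22 q / d * (g11 q / d) - (g12 q / d)\<^sup>2 = (g11 q * g22 q - (g12 q)\<^sup>2) / d\<^sup>2"
    using \<open>d > 0\<close> by (simp add: field_simps power2_eq_square)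
  also have "\<dots> = 1 / d"
    using \<open>d > 0\<close> by (simp add: d_def gdet_def power2_eq_square)
  finally have "g22 q / gdet g11 g12 g22 q * Re (dx (dx G) q)
      - g12 q / gdet g11 g12 g22 q * (Re (dx (dy G) q) + Re (dy (dx G) q))
      + g11 q / gdet g11 g12 g22 q * Re (dy (dy G) q) \<le> 0"
    using \<open>d > 0\<close> \<open>g22 q > 0\<close> crit(3) unfolding d_def[symmetric]
    by (intro nonpos_quadratic_form_trace) simp_all
  then show ?thesis
    unfolding L using crit(1,2) by simp
qed

lemma maximum_principle_Re:
  assumes "open S" "riem_metric_on S g11 g12 g22" "Ck_on 2 S F" "r > 0" "cball p r \<subseteq> S"
    and "\<And>w. w \<in> cball p r \<Longrightarrow> Re (laplacian g11 g12 g22 F w) > 0"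
  shows "\<exists>q\<in>sphere p r. Re (F p) \<le> Re (F q)"
proof -
  have "continuous_on (cball p r) (\<lambda>w. Re (F w))"
    using continuous_on_subset[OF Ck_on_imp_continuous_on[OF assms(3)] assms(5)]
    by (intro continuous_intros)
  moreover have "cball p r \<noteq> {}"
    using assms(4) by simp
  ultimately obtain q where q: "q \<in> cball p r" and qmax: "\<forall>w\<in>cball p r. Re (F w) \<le> Re (F q)"
    using continuous_attains_sup[OF compact_cball] by blast
  have "q \<in> sphere p r"
  proof (rule ccontr)
    assume "q \<notin> sphere p r"
    then have "r - dist p q > 0"
      using q by simp
    have ball: "ball q (r - dist p q) \<subseteq> cball p r"
    proof
      fix w assume "w \<in> ball q (r - dist p q)"
      then show "w \<in> cball p r"
        using dist_triangle[of p w q] by simp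
    qed
    have "Re (laplacian g11 g12 g22 F q) \<le> 0"
    proof (rule laplacian_Re_nonpos_at_local_max[OF assms(1-3) \<open>r - dist p q > 0\<close>])
      show "ball q (r - dist p q) \<subseteq> S"
        using ball assms(5) by blast
      show "\<And>w. w \<in> ball q (r - dist p q) \<Longrightarrow> Re (F w) \<le> Re (F q)"
        using ball qmax by blast
    qed
    with assms(6)[OF q] show False by simp
  qed
  moreover have "p \<in> cball p r"
    using assms(4) by simp
  ultimately show ?thesis
    using qmax by blast
qed

subsection \<open>The interior estimate\<close>

lemma partials_norm_le_dnorm:
  assumes "g11 z > 0" "gdet g11 g12 g22 z > 0"
  shows "0 \<le> dnorm g11 g12 g22 u z"
    and "cmod (dx u z) + cmod (dy u z) \<le> 2 * sqrt (g11 z + g22 z) * dnorm g11 g12 g22 u z"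
proof -
  define a b c d X Y where "a = g11 z" "b = g12 z" "c = g22 z" "d = gdet g11 g12 g22 z"
    "X = dx u z" "Y = dy u z"
  define Q where "Q = c * (cmod X)\<^sup>2 - 2 * b * (X \<bullet> Y) + a * (cmod Y)\<^sup>2"
  have d: "d = a * c - b\<^sup>2" "d > 0"
    using assms(2) by (simp_all add: a_b_c_d_X_Y_def gdet_def)
  have "a > 0"
    using assms(1) by (simp add: a_b_c_d_X_Y_def)
  have "a * c > 0"
    using d zero_le_power2[of b] by linarith
  then have "c > 0"
    using \<open>a > 0\<close> zero_less_mult_pos by blast
  have "(a + c) * Q = d * ((cmod X)\<^sup>2 + (cmod Y)\<^sup>2) +
      ((c * Re X - b * Re Y)\<^sup>2 + (b * Re X - a * Re Y)\<^sup>2 +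
       (c * Im X - b * Im Y)\<^sup>2 + (b * Im X - a * Im Y)\<^sup>2)"
    unfolding Q_def d(1) cmod_power2 inner_complex_def by (simp add: power2_eq_square algebra_simps)
  then have sq: "d * ((cmod X)\<^sup>2 + (cmod Y)\<^sup>2) \<le> (a + c) * Q"
    by simp
  have "0 \<le> d * ((cmod X)\<^sup>2 + (cmod Y)\<^sup>2)"
    using d(2) by simp
  then have "0 \<le> (a + c) * Q"
    using sq by (rule order_trans)
  then have "Q \<ge> 0"
    using \<open>a > 0\<close> \<open>c > 0\<close> by (simp add: zero_le_mult_iff)
  have dnorm: "dnorm g11 g12 g22 u z = sqrt (Q / d)"
    unfolding dnorm_def Let_def Q_def a_b_c_d_X_Y_def
    by (simp add: diff_divide_distrib add_divide_distrib)
  show "0 \<le> dnorm g11 g12 g22 u z"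
    unfolding dnorm using \<open>Q \<ge> 0\<close> d(2) by simp
  have "(cmod X)\<^sup>2 + (cmod Y)\<^sup>2 \<le> (a + c) * (Q / d)"
    using sq d(2) by (simp add: pos_le_divide_eq mult.commute)
  also have "\<dots> = (sqrt (a + c) * dnorm g11 g12 g22 u z)\<^sup>2"
    unfolding dnorm power_mult_distrib using \<open>Q \<ge> 0\<close> d(2) \<open>a > 0\<close> \<open>c > 0\<close> by simp
  finally have sum: "(cmod X)\<^sup>2 + (cmod Y)\<^sup>2 \<le> (sqrt (a + c) * dnorm g11 g12 g22 u z)\<^sup>2" .
  have nonneg: "sqrt (a + c) * dnorm g11 g12 g22 u z \<ge> 0"
    unfolding dnorm using \<open>Q \<ge> 0\<close> d(2) \<open>a > 0\<close> \<open>c > 0\<close> by simp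
  have "(cmod X)\<^sup>2 \<le> (sqrt (a + c) * dnorm g11 g12 g22 u z)\<^sup>2"
    "(cmod Y)\<^sup>2 \<le> (sqrt (a + c) * dnorm g11 g12 g22 u z)\<^sup>2"
    using sum zero_le_power2[of "cmod X"] zero_le_power2[of "cmod Y"] by linarith+
  then have "cmod X \<le> sqrt (a + c) * dnorm g11 g12 g22 u z"
    "cmod Y \<le> sqrt (a + c) * dnorm g11 g12 g22 u z"
    using nonneg by (auto intro: power2_le_imp_le)
  then show "cmod (dx u z) + cmod (dy u z) \<le> 2 * sqrt (g11 z + g22 z) * dnorm g11 g12 g22 u z"
    by (simp add: a_b_c_d_X_Y_def)
qed
lemma laplacian_lipschitz:
  assumes "open S" "riem_metric_on S g11 g12 g22" "Ck_on 3 S f" "convex K" "K \<subseteq> S"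
    and "\<And>w. w \<in> K \<Longrightarrow> g11 w + g22 w \<le> T"
    and "\<And>w. w \<in> K \<Longrightarrow> dnorm g11 g12 g22 (laplacian g11 g12 g22 f) w \<le> M"
    and "x \<in> K" "y \<in> K"
  shows "cmod (laplacian g11 g12 g22 f x - laplacian g11 g12 g22 f y) \<le> 2 * sqrt T * M * cmod (x - y)"
proof (rule Ck_on_1_lipschitz[OF assms(1) _ assms(4,5) _ assms(8,9)])
  show "Ck_on 1 S (laplacian g11 g12 g22 f)"
    using assms(3) by (intro Ck_on_laplacian[OF assms(1,2)]) (simp add: numeral_3_eq_3)
  fix w assume "w \<in> K"
  then have "w \<in> S"
    using assms(5) by blast
  note pos = riem_metric_on_pos[OF assms(2) \<open>w \<in> S\<close>]
  note dnorm = partials_norm_le_dnorm[OF pos(2,1), of "laplacian g11 g12 g22 f"]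
  have "cmod (dx (laplacian g11 g12 g22 f) w) + cmod (dy (laplacian g11 g12 g22 f) w)
      \<le> 2 * sqrt (g11 w + g22 w) * dnorm g11 g12 g22 (laplacian g11 g12 g22 f) w"
    by (rule dnorm(2))
  also have "\<dots> \<le> 2 * sqrt T * M"
    using assms(6,7)[OF \<open>w \<in> K\<close>] pos dnorm(1) unfolding mult.assoc
    by (intro mult_left_mono mult_mono) simp_all
  finally show "norm (dx (laplacian g11 g12 g22 f) w) + norm (dy (laplacian g11 g12 g22 f) w)
      \<le> 2 * sqrt T * M" .
qed

lemma Ck_on_sq_dist: "open S \<Longrightarrow> Ck_on k S (\<lambda>w. complex_of_real ((cmod (w - p))\<^sup>2))"
proof -
  assume "open S"
  have "bounded_linear (\<lambda>w. complex_of_real (Re w))" "bounded_linear (\<lambda>w. complex_of_real (Im w))"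
    by (intro bounded_linear_compose[OF bounded_linear_of_real] bounded_linear_Re bounded_linear_Im)+
  then have "Ck_on k S (\<lambda>w. (of_real (Re w) - of_real (Re p)) * (of_real (Re w) - of_real (Re p)) +
      (of_real (Im w) - of_real (Im p)) * (of_real (Im w) - of_real (Im p)) :: complex)"
    by (intro Ck_on_add Ck_on_mult Ck_on_diff Ck_on_const Ck_on_bounded_linear \<open>open S\<close>)
  moreover have "(\<lambda>w. complex_of_real ((cmod (w - p))\<^sup>2)) = (\<lambda>w. (of_real (Re w) - of_real (Re p)) *
      (of_real (Re w) - of_real (Re p)) +
      (of_real (Im w) - of_real (Im p)) * (of_real (Im w) - of_real (Im p)))"
    by (simp only: cmod_power2 fun_eq_iff) (simp add: power2_eq_square)
  ultimately show ?thesis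
    by simp
qed

text \<open>The bound is uniform in the centre \<open>p\<close> because \<open>|w - p|\<^sup>2\<close> is a combination of the fixed
  functions \<open>|w|\<^sup>2\<close>, \<open>Re w\<close>, \<open>Im w\<close> and \<open>1\<close> with coefficients bounded in terms of \<open>|p|\<close>.\<close>

lemma laplacian_sq_dist_bounded:
  assumes "open S" "riem_metric_on S g11 g12 g22" "compact K" "K \<subseteq> S"
  obtains P where "\<And>p w. cmod p \<le> \<rho> \<Longrightarrow> w \<in> K \<Longrightarrow>
    cmod (laplacian g11 g12 g22 (\<lambda>w. complex_of_real ((cmod (w - p))\<^sup>2)) w) \<le> P"
proof -
  let ?L = "laplacian g11 g12 g22"
  define R I Q where "R = (\<lambda>w::complex. complex_of_real (Re w))"
    and "I = (\<lambda>w::complex. complex_of_real (Im w))"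
    and "Q = (\<lambda>w::complex. complex_of_real ((cmod w)\<^sup>2))"
  have "bounded_linear R" "bounded_linear I"
    unfolding R_def I_def
    by (intro bounded_linear_compose[OF bounded_linear_of_real] bounded_linear_Re bounded_linear_Im)+
  then have C: "Ck_on 2 S R" "Ck_on 2 S I" "Ck_on 2 S Q" "Ck_on 2 S (\<lambda>w. 1)"
    unfolding Q_def using Ck_on_sq_dist[OF assms(1), of 2 0]
    by (simp_all add: Ck_on_bounded_linear Ck_on_const assms(1))
  have bounded: "\<exists>B. \<forall>w\<in>K. cmod (?L u w) \<le> B" if "Ck_on 2 S u" for u
  proof -
    have "Ck_on 0 S (?L u)"
      using that by (intro Ck_on_laplacian[OF assms(1,2)]) (simp add: numeral_2_eq_2)
    then have "continuous_on K (?L u)"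
      using assms(4) by (simp add: continuous_on_subset)
    then show ?thesis
      using continuous_on_compact_bound[OF assms(3)] by metis
  qed
  obtain BQ where BQ: "\<forall>w\<in>K. cmod (?L Q w) \<le> BQ"
    using bounded[OF C(3)] by blast
  obtain BR where BR: "\<forall>w\<in>K. cmod (?L R w) \<le> BR"
    using bounded[OF C(1)] by blast
  obtain BI where BI: "\<forall>w\<in>K. cmod (?L I w) \<le> BI"
    using bounded[OF C(2)] by blast
  show thesis
  proof (rule that[of "BQ + 2 * \<rho> * BR + 2 * \<rho> * BI"])
    fix p w assume "cmod p \<le> \<rho>" "w \<in> K"
    then have "w \<in> S"
      using assms(4) by blast
    have "(cmod (v - p))\<^sup>2 = (cmod v)\<^sup>2 + (- 2 * Re p) * Re v + (- 2 * Im p) * Im v + (cmod p)\<^sup>2" for v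
      by (simp only: cmod_power2) (simp add: power2_eq_square algebra_simps)
    then have decomp: "(\<lambda>w. complex_of_real ((cmod (w - p))\<^sup>2)) =
        (\<lambda>w. 1 * (1 * Q w + of_real (- 2 * Re p) * R w) +
          1 * (of_real (- 2 * Im p) * I w + of_real ((cmod p)\<^sup>2) * 1))"
      unfolding Q_def R_def I_def
      by (simp only: fun_eq_iff of_real_add of_real_mult mult_1_left mult_1_right add.assoc simp_thms)
    have U: "Ck_on 2 S (\<lambda>w. 1 * Q w + of_real (- 2 * Re p) * R w)"
      and V: "Ck_on 2 S (\<lambda>w. of_real (- 2 * Im p) * I w + of_real ((cmod p)\<^sup>2) * 1)"
      using C by (intro Ck_on_add Ck_on_mult Ck_on_const assms(1); simp)+
    have "?L (\<lambda>w. complex_of_real ((cmod (w - p))\<^sup>2)) w =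
        1 * ?L (\<lambda>w. 1 * Q w + of_real (- 2 * Re p) * R w) w +
        1 * ?L (\<lambda>w. of_real (- 2 * Im p) * I w + of_real ((cmod p)\<^sup>2) * 1) w"
      unfolding decomp by (rule laplacian_linear_combination[OF assms(1,2) U V \<open>w \<in> S\<close>])
    also have "?L (\<lambda>w. 1 * Q w + of_real (- 2 * Re p) * R w) w =
        1 * ?L Q w + of_real (- 2 * Re p) * ?L R w"
      by (rule laplacian_linear_combination[OF assms(1,2) C(3,1) \<open>w \<in> S\<close>])
    also have "?L (\<lambda>w. of_real (- 2 * Im p) * I w + of_real ((cmod p)\<^sup>2) * 1) w =
        of_real (- 2 * Im p) * ?L I w + of_real ((cmod p)\<^sup>2) * 0"
      using laplacian_linear_combination[OF assms(1,2) C(2,4) \<open>w \<in> S\<close>] by (simp only: laplacian_const)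
    finally have "?L (\<lambda>w. complex_of_real ((cmod (w - p))\<^sup>2)) w =
        ?L Q w + of_real (- 2 * Re p) * ?L R w + of_real (- 2 * Im p) * ?L I w"
      by simp
    then have "cmod (?L (\<lambda>w. complex_of_real ((cmod (w - p))\<^sup>2)) w)
        \<le> cmod (?L Q w) + 2 * \<bar>Re p\<bar> * cmod (?L R w) + 2 * \<bar>Im p\<bar> * cmod (?L I w)"
      using norm_triangle_ineq[of "?L Q w + of_real (- 2 * Re p) * ?L R w"
          "of_real (- 2 * Im p) * ?L I w"]
        norm_triangle_ineq[of "?L Q w" "of_real (- 2 * Re p) * ?L R w"]
      by (simp add: norm_mult)
    also have "\<dots> \<le> BQ + 2 * \<rho> * BR + 2 * \<rho> * BI"
      using BQ BR BI \<open>w \<in> K\<close> \<open>cmod p \<le> \<rho>\<close> abs_Re_le_cmod[of p] abs_Im_le_cmod[of p]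
      by (intro add_mono mult_mono mult_left_mono) auto
    finally show "cmod (?L (\<lambda>w. complex_of_real ((cmod (w - p))\<^sup>2)) w) \<le> BQ + 2 * \<rho> * BR + 2 * \<rho> * BI" .
  qed
qed

lemma laplacian_interior_estimate:
  assumes "open S" "riem_metric_on S g11 g12 g22" "Ck_on 2 S f" "r > 0" "cball p r \<subseteq> S"
    and "\<And>w. w \<in> cball p r \<Longrightarrow> cmod (f w) \<le> \<delta>"
    and "\<And>w. w \<in> cball p r \<Longrightarrow> cmod (laplacian g11 g12 g22 f w - laplacian g11 g12 g22 f p) \<le> L"
    and "\<And>w. w \<in> cball p r \<Longrightarrow> cmod (laplacian g11 g12 g22 (\<lambda>w. complex_of_real ((cmod (w - p))\<^sup>2)) w) \<le> P"
    and "2 * \<delta> < k * r\<^sup>2"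
  shows "cmod (laplacian g11 g12 g22 f p) \<le> L + k * P"
proof (rule ccontr)
  let ?L = "laplacian g11 g12 g22"
  define \<psi> where "\<psi> = (\<lambda>w. complex_of_real ((cmod (w - p))\<^sup>2))"
  define A where "A = cmod (?L f p)"
  assume "\<not> cmod (?L f p) \<le> L + k * P"
  then have "A > L + k * P"
    by (simp add: A_def)
  have p: "p \<in> cball p r"
    using assms(4) by simp
  have "0 \<le> L"
    using assms(7)[OF p] by simp
  have "0 \<le> P" "0 \<le> \<delta>"
    using order_trans[OF norm_ge_zero assms(8)[OF p]] order_trans[OF norm_ge_zero assms(6)[OF p]] .
  have "k > 0"
  proof (rule ccontr)
    assume "\<not> k > 0"
    then have "k * r\<^sup>2 \<le> 0"
      by (simp add: mult_nonpos_nonneg)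
    with assms(9) \<open>0 \<le> \<delta>\<close> show False by simp
  qed
  then have "k * P \<ge> 0"
    using \<open>0 \<le> P\<close> by simp
  then have "A > 0"
    using \<open>A > L + k * P\<close> \<open>0 \<le> L\<close> by linarith
  define e where "e = cnj (?L f p) / of_real A"
  have "cmod e = 1"
    using \<open>A > 0\<close> by (simp add: e_def norm_divide A_def)
  have "cnj (?L f p) * ?L f p = of_real A * of_real A"
    unfolding A_def using complex_norm_square[of "?L f p"] by (simp add: power2_eq_square mult.commute)
  then have "e * ?L f p = of_real A"
    using \<open>A > 0\<close> by (simp add: e_def)
  define F where "F = (\<lambda>w. e * f w + of_real (- k) * \<psi> w)"
  have \<psi>: "Ck_on 2 S \<psi>"
    unfolding \<psi>_def by (rule Ck_on_sq_dist[OF assms(1)])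
  have "Re (?L F w) > 0" if w: "w \<in> cball p r" for w
  proof -
    have "?L F w = e * ?L f w + of_real (- k) * ?L \<psi> w"
      unfolding F_def using w assms(5) by (intro laplacian_linear_combination[OF assms(1-3) \<psi>]) auto
    moreover have "Re (e * ?L f w) \<ge> A - L"
    proof -
      have "e * ?L f w = of_real A + e * (?L f w - ?L f p)"
        using \<open>e * ?L f p = of_real A\<close> by (simp add: algebra_simps)
      moreover have "\<bar>Re (e * (?L f w - ?L f p))\<bar> \<le> L"
        using abs_Re_le_cmod[of "e * (?L f w - ?L f p)"] assms(7)[OF w] \<open>cmod e = 1\<close>
        by (simp add: norm_mult)
      ultimately show ?thesis by simp
    qed
    moreover have "Re (?L \<psi> w) \<le> P"
      using abs_Re_le_cmod[of "?L \<psi> w"] assms(8)[OF w] by (simp add: \<psi>_def)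
    then have "k * Re (?L \<psi> w) \<le> k * P"
      using \<open>k > 0\<close> by simp
    ultimately show ?thesis
      using \<open>A > L + k * P\<close> by simp
  qed
  moreover have "Ck_on 2 S F"
    unfolding F_def by (intro Ck_on_add Ck_on_mult Ck_on_const assms(1,3) \<psi>)
  ultimately obtain q where q: "q \<in> sphere p r" "Re (F p) \<le> Re (F q)"
    using maximum_principle_Re[OF assms(1,2) _ assms(4,5)] by blast
  have "Re (F p) \<ge> - \<delta>"
    using abs_Re_le_cmod[of "e * f p"] assms(6)[OF p] \<open>cmod e = 1\<close>
    by (simp add: F_def \<psi>_def norm_mult)
  moreover have "Re (F q) \<le> \<delta> - k * r\<^sup>2"
    using abs_Re_le_cmod[of "e * f q"] assms(6)[of q] q(1) \<open>cmod e = 1\<close>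
    by (simp add: F_def \<psi>_def norm_mult dist_norm norm_minus_commute)
  ultimately show False
    using q(2) assms(9) by simp
qed

lemma laplacian_bound_from_dnorm_bound:
  assumes "open S" "riem_metric_on S g11 g12 g22" "Ck_on 3 S f"
    and "convex K" "K \<subseteq> S" "r > 0" "cball p r \<subseteq> K" "T \<ge> 0" "M \<ge> 0"
    and "\<And>w. w \<in> K \<Longrightarrow> g11 w + g22 w \<le> T"
    and "\<And>w. w \<in> K \<Longrightarrow> dnorm g11 g12 g22 (laplacian g11 g12 g22 f) w \<le> M"
    and "\<And>w. w \<in> K \<Longrightarrow> cmod (f w) \<le> \<delta>"
    and "\<And>w. w \<in> cball p r \<Longrightarrow>
      cmod (laplacian g11 g12 g22 (\<lambda>w. complex_of_real ((cmod (w - p))\<^sup>2)) w) \<le> P"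
    and "2 * \<delta> < k * r\<^sup>2"
  shows "cmod (laplacian g11 g12 g22 f p) \<le> 2 * sqrt T * M * r + k * P"
proof (rule laplacian_interior_estimate[OF assms(1,2) _ assms(6) _ _ _ assms(13,14)])
  show "Ck_on 2 S f"
    using Ck_on_mono[OF assms(3)] by simp
  show "cball p r \<subseteq> S" "\<And>w. w \<in> cball p r \<Longrightarrow> cmod (f w) \<le> \<delta>"
    using assms(5,7,12) by auto
  fix w assume "w \<in> cball p r"
  moreover have "p \<in> cball p r"
    using assms(6) by simp
  ultimately have "cmod (laplacian g11 g12 g22 f w - laplacian g11 g12 g22 f p)
      \<le> 2 * sqrt T * M * cmod (w - p)"
    using assms(7) by (intro laplacian_lipschitz[OF assms(1-5,10,11)]) auto
  also have "\<dots> \<le> 2 * sqrt T * M * r"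
    using \<open>w \<in> cball p r\<close> assms(8,9)
    by (intro mult_left_mono) (simp_all add: dist_norm norm_minus_commute)
  finally show "cmod (laplacian g11 g12 g22 f w - laplacian g11 g12 g22 f p) \<le> 2 * sqrt T * M * r" .
qed

lemma riem_metric_on_trace_bounded:
  assumes "riem_metric_on S g11 g12 g22" "compact K" "K \<subseteq> S"
  obtains T where "T \<ge> 0" "\<And>w. w \<in> K \<Longrightarrow> g11 w + g22 w \<le> T"
proof -
  have "Ck_on 0 S g11" "Ck_on 0 S g22"
    using assms(1) unfolding riem_metric_on_def smooth_on_iff_Ck_on by blast+
  then have "continuous_on K (\<lambda>w. g11 w + g22 w)"
    using assms(3) by (auto intro!: continuous_intros intro: continuous_on_subset)
  then obtain T where "T \<ge> 0" "\<And>w. w \<in> K \<Longrightarrow> norm (g11 w + g22 w) \<le> T"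
    using continuous_on_compact_bound[OF assms(2)] by blast
  then show thesis
    using that by (simp add: abs_le_iff)
qed

theorem lemma4:
  fixes c \<delta> M :: real and g11 g12 g22 :: "complex \<Rightarrow> real"
  assumes "c > 0" and "\<delta> > 0" and "M > 0"
    and "riem_metric_on (ball 0 c) g11 g12 g22"
  shows "\<exists>lam::real. \<forall>f :: complex \<Rightarrow> complex.
           smooth_on (ball 0 c) f \<and>
           (\<forall>z\<in>ball 0 c. cmod (f z) \<le> \<delta>) \<and>
           (\<forall>z\<in>ball 0 c. dnorm g11 g12 g22 (laplacian g11 g12 g22 f) z \<le> M)
           \<longrightarrow> (\<forall>z\<in>ball 0 (c / 4). cmod (laplacian g11 g12 g22 f z) \<le> lam)"
proof -
  define r W where "r = c / 4" and "W = cball (0::complex) (3 * r)"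
  have "r > 0" "compact W" "convex W" "W \<subseteq> ball 0 c"
    using assms(1) by (auto simp: r_def W_def)
  obtain T where "T \<ge> 0" and T: "\<And>w. w \<in> W \<Longrightarrow> g11 w + g22 w \<le> T"
    using riem_metric_on_trace_bounded[OF assms(4) \<open>compact W\<close> \<open>W \<subseteq> ball 0 c\<close>] by blast
  obtain P where P: "\<And>p w. cmod p \<le> r \<Longrightarrow> w \<in> W \<Longrightarrow>
      cmod (laplacian g11 g12 g22 (\<lambda>w. complex_of_real ((cmod (w - p))\<^sup>2)) w) \<le> P"
    using laplacian_sq_dist_bounded[OF _ assms(4) \<open>compact W\<close> \<open>W \<subseteq> ball 0 c\<close>] by blast
  define k where "k = 2 * \<delta> / r\<^sup>2 + 1"
  have "2 * \<delta> < k * r\<^sup>2"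
    using \<open>r > 0\<close> by (simp add: k_def field_simps)
  show ?thesis
  proof (intro exI[of _ "2 * sqrt T * M * r + k * P"] allI impI ballI)
    fix f :: "complex \<Rightarrow> complex" and p :: complex
    assume hyp: "smooth_on (ball 0 c) f \<and> (\<forall>z\<in>ball 0 c. cmod (f z) \<le> \<delta>) \<and>
      (\<forall>z\<in>ball 0 c. dnorm g11 g12 g22 (laplacian g11 g12 g22 f) z \<le> M)"
      and "p \<in> ball 0 (c / 4)"
    then have "cball p r \<subseteq> W"
      using assms(1) by (simp add: W_def r_def cball_subset_cball_iff dist_norm)
    with hyp \<open>W \<subseteq> ball 0 c\<close> show "cmod (laplacian g11 g12 g22 f p) \<le> 2 * sqrt T * M * r + k * P"
      by (intro laplacian_bound_from_dnorm_bound[OF _ assms(4) _ \<open>convex W\<close> \<open>W \<subseteq> ball 0 c\<close>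
          \<open>r > 0\<close> _ \<open>T \<ge> 0\<close> _ T _ _ P \<open>2 * \<delta> < k * r\<^sup>2\<close>])
        (use assms(3) \<open>p \<in> ball 0 (c / 4)\<close> in \<open>auto simp: smooth_on_iff_Ck_on r_def\<close>)
  qed
qed

end
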